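(* For distinct $a,b\in\mathbb{B}^2$, $h_{\mathbb{B}^2}(a,b)=\log H$, where $$H=\frac{\operatorname{Re}\big((1-a\overline{b})^2\big)+|a-b|^2+2\,\operatorname{Re}(1-a\overline{b})\sqrt{|a-b|^2-\big(\operatorname{Im}(a\overline{b})\big)^2}}{(1-|a|^2)(1-|b|^2)}.$$
   Context: $\mathbb{B}^2$ is the open unit disk in $\mathbb{C}$. For distinct $a,b\in\mathbb{B}^2$ the Hilbert metric is $h_{\mathbb{B}^2}(a,b)=\log\frac{|u-b||a-v|}{|u-a||b-v|}$, where $u,v$ are the two intersection points of the line $L[a,b]$ through $a,b$ with the unit circle, labelled so that $|u-a|<|u-b|$. *)

theory Defs
  imports "HOL-Analysis.Analysis"
begin

definition unit_disk :: "complex set" where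
  "unit_disk = ball 0 1"

definition cline :: "complex \<Rightarrow> complex \<Rightarrow> complex set" where
  "cline a b = {a + of_real t * (b - a) | t. True}"

definition hilbert_disk :: "complex \<Rightarrow> complex \<Rightarrow> real" where
  "hilbert_disk a b =
     (THE h. \<exists>u v. u \<in> cline a b \<and> v \<in> cline a b \<and> cmod u = 1 \<and> cmod v = 1 \<and>
        u \<noteq> v \<and> cmod (u - a) < cmod (u - b) \<and>
        h = ln ((cmod (u - b) * cmod (a - v)) / (cmod (u - a) * cmod (b - v))))"

end

theory Submission
  imports Defs
begin

(* Parametrise the line through a and b as a + t (b - a). The points of the unit circle on it
   are the roots of the real quadratic |a + t (b - a)|^2 - 1, which is negative at t = 0 and
   t = 1 since a and b lie in the disk; so the roots satisfy t1 < 0 < 1 < t2. The Hilbert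
   distance is the log of the cross ratio (1 - t1) t2 / (-t1 (t2 - 1)) of the parameters, and
   by Vieta this cross ratio is (q + s) / (q - s) = (q + s)^2 / (q^2 - s^2), where
   q = Re (1 - a conj b) and s is the square root of the discriminant. *)

lemma cmod_affine_power2:
  "(cmod (a + of_real t * d))\<^sup>2 = (cmod d)\<^sup>2 * t\<^sup>2 + 2 * Re (a * cnj d) * t + (cmod a)\<^sup>2"
  unfolding cmod_power2 by (simp add: power2_eq_square algebra_simps)

lemma quadratic_factorization:
  fixes D p c s t :: real
  assumes "D \<noteq> 0" and "s\<^sup>2 = p\<^sup>2 - D * c"
  shows "D * t\<^sup>2 + 2 * p * t + c = D * (t - (- p - s) / D) * (t - (- p + s) / D)"
  using assms by (simp add: field_simps power2_eq_square) (metis distrib_left)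

lemma between_roots_if_negative:
  fixes D t\<^sub>1 t\<^sub>2 x :: real
  assumes "D > 0" and "t\<^sub>1 \<le> t\<^sub>2" and "D * (x - t\<^sub>1) * (x - t\<^sub>2) < 0"
  shows "t\<^sub>1 < x \<and> x < t\<^sub>2"
proof -
  have "(x - t\<^sub>1) * (x - t\<^sub>2) < 0"
    using assms(1,3) by (simp add: mult.assoc zero_less_mult_iff mult_less_0_iff)
  then show ?thesis using assms(2) by (auto simp: mult_less_0_iff)
qed

lemma unit_circle_on_line:
  fixes a b :: complex
  assumes "cmod a < 1" and "cmod b < 1" and "a \<noteq> b"
  defines "D \<equiv> (cmod (b - a))\<^sup>2" and "p \<equiv> Re (a * cnj (b - a))" and "c \<equiv> (cmod a)\<^sup>2 - 1"
  defines "s \<equiv> sqrt (p\<^sup>2 - D * c)"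
  shows "(- p - s) / D < 0" and "1 < (- p + s) / D"
    and "cmod (a + of_real t * (b - a)) = 1 \<longleftrightarrow> t = (- p - s) / D \<or> t = (- p + s) / D"
proof -
  define t\<^sub>1 t\<^sub>2 where "t\<^sub>1 = (- p - s) / D" and "t\<^sub>2 = (- p + s) / D"
  have "D > 0" using assms(3) by (simp add: D_def)
  moreover have "c < 0" using assms(1) by (simp add: c_def abs_square_less_1)
  ultimately have "p\<^sup>2 - D * c > 0" using mult_pos_neg[of D c] zero_le_power2[of p] by linarith
  then have "s\<^sup>2 = p\<^sup>2 - D * c" and "s \<ge> 0" by (simp_all add: s_def)
  have quad: "(cmod (a + of_real t * (b - a)))\<^sup>2 - 1 = D * (t - t\<^sub>1) * (t - t\<^sub>2)" for t
    using quadratic_factorization[OF _ \<open>s\<^sup>2 = _\<close>, of t] \<open>D > 0\<close> cmod_affine_power2[of a t "b - a"]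
    by (simp add: t\<^sub>1_def t\<^sub>2_def D_def p_def c_def)
  have "t\<^sub>1 \<le> t\<^sub>2" using \<open>s \<ge> 0\<close> \<open>D > 0\<close> by (simp add: t\<^sub>1_def t\<^sub>2_def divide_right_mono)
  have "D * (0 - t\<^sub>1) * (0 - t\<^sub>2) < 0" using quad[of 0] \<open>c < 0\<close> by (simp add: c_def)
  then have "t\<^sub>1 < 0 \<and> 0 < t\<^sub>2" by (rule between_roots_if_negative[OF \<open>D > 0\<close> \<open>t\<^sub>1 \<le> t\<^sub>2\<close>])
  have "D * (1 - t\<^sub>1) * (1 - t\<^sub>2) < 0"
    using quad[of 1] assms(2) power_strict_mono[of "cmod b" 1 2] by simp
  then have "t\<^sub>1 < 1 \<and> 1 < t\<^sub>2" by (rule between_roots_if_negative[OF \<open>D > 0\<close> \<open>t\<^sub>1 \<le> t\<^sub>2\<close>])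
  with \<open>t\<^sub>1 < 0 \<and> 0 < t\<^sub>2\<close> show "(- p - s) / D < 0" and "1 < (- p + s) / D"
    by (simp_all add: t\<^sub>1_def t\<^sub>2_def)
  have "cmod (a + of_real t * (b - a)) = 1 \<longleftrightarrow> (cmod (a + of_real t * (b - a)))\<^sup>2 - 1 = 0"
    by (smt (verit) norm_ge_zero power2_eq_1_iff)
  also have "\<dots> \<longleftrightarrow> t = t\<^sub>1 \<or> t = t\<^sub>2" using quad \<open>D > 0\<close> by simp
  finally show "cmod (a + of_real t * (b - a)) = 1 \<longleftrightarrow> t = (- p - s) / D \<or> t = (- p + s) / D"
    by (simp add: t\<^sub>1_def t\<^sub>2_def)
qed

lemma hilbert_disk_eq_ln_cross_ratio:
  fixes a b :: complex and t\<^sub>1 t\<^sub>2 :: real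
  assumes "a \<noteq> b" and "t\<^sub>1 < 0" and "1 < t\<^sub>2"
    and circle: "\<And>t. cmod (a + of_real t * (b - a)) = 1 \<longleftrightarrow> t = t\<^sub>1 \<or> t = t\<^sub>2"
  shows "hilbert_disk a b = ln ((1 - t\<^sub>1) * t\<^sub>2 / (- t\<^sub>1 * (t\<^sub>2 - 1)))"
proof -
  define P where "P t = a + of_real t * (b - a)" for t
  have dist: "cmod (P x - P y) = \<bar>x - y\<bar> * cmod (b - a)" for x y
  proof -
    have "P x - P y = of_real (x - y) * (b - a)" by (simp add: P_def algebra_simps)
    then show ?thesis by (simp only: norm_mult norm_of_real)
  qed
  have "a = P 0" and "b = P 1" by (simp_all add: P_def)
  then have from_a: "cmod (P x - a) = \<bar>x\<bar> * cmod (b - a)"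
    and from_b: "cmod (P x - b) = \<bar>x - 1\<bar> * cmod (b - a)" for x
    using dist[of x 0] dist[of x 1] by simp_all
  have "b - a \<noteq> 0" and "cmod (b - a) > 0" using assms(1) by simp_all
  have ratio: "cmod (P u - b) * cmod (a - P v) / (cmod (P u - a) * cmod (b - P v))
      = (1 - u) * v / (- u * (v - 1))" if "u < 0" "1 < v" for u v
    using that from_a from_b \<open>b - a \<noteq> 0\<close> by (simp add: norm_minus_commute)
  show ?thesis
    unfolding hilbert_disk_def
  proof (rule the_equality)
    show "\<exists>u v. u \<in> cline a b \<and> v \<in> cline a b \<and> cmod u = 1 \<and> cmod v = 1 \<and> u \<noteq> v \<and>
        cmod (u - a) < cmod (u - b) \<and>
        ln ((1 - t\<^sub>1) * t\<^sub>2 / (- t\<^sub>1 * (t\<^sub>2 - 1))) =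
          ln (cmod (u - b) * cmod (a - v) / (cmod (u - a) * cmod (b - v)))"
    proof (intro exI conjI)
      show "P t\<^sub>1 \<in> cline a b" "P t\<^sub>2 \<in> cline a b" by (auto simp: cline_def P_def)
      show "cmod (P t\<^sub>1) = 1" "cmod (P t\<^sub>2) = 1" using circle by (auto simp: P_def)
      show "P t\<^sub>1 \<noteq> P t\<^sub>2" using assms(2,3) \<open>b - a \<noteq> 0\<close> by (simp add: P_def)
      show "cmod (P t\<^sub>1 - a) < cmod (P t\<^sub>1 - b)"
        using assms(2) \<open>cmod (b - a) > 0\<close> by (simp add: from_a from_b algebra_simps)
    qed (simp add: ratio assms)
  next
    fix h assume "\<exists>u v. u \<in> cline a b \<and> v \<in> cline a b \<and> cmod u = 1 \<and> cmod v = 1 \<and> u \<noteq> v \<and>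
        cmod (u - a) < cmod (u - b) \<and>
        h = ln (cmod (u - b) * cmod (a - v) / (cmod (u - a) * cmod (b - v)))"
    then obtain x y where "cmod (P x) = 1" "cmod (P y) = 1" "P x \<noteq> P y"
      and closer_to_a: "cmod (P x - a) < cmod (P x - b)"
      and h: "h = ln (cmod (P x - b) * cmod (a - P y) / (cmod (P x - a) * cmod (b - P y)))"
      unfolding cline_def P_def by blast
    have "x \<noteq> t\<^sub>2"
      using closer_to_a assms(3) \<open>cmod (b - a) > 0\<close> by (auto simp: from_a from_b algebra_simps)
    then have "x = t\<^sub>1" using circle \<open>cmod (P x) = 1\<close> by (auto simp: P_def)
    moreover have "y = t\<^sub>2" using circle \<open>cmod (P y) = 1\<close> \<open>P x \<noteq> P y\<close> \<open>x = t\<^sub>1\<close> by (auto simp: P_def)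
    ultimately show "h = ln ((1 - t\<^sub>1) * t\<^sub>2 / (- t\<^sub>1 * (t\<^sub>2 - 1)))"
      using h ratio assms(2,3) by simp
  qed
qed

lemma cross_ratio_of_roots:
  fixes D p c s :: real
  assumes "D \<noteq> 0" and "s\<^sup>2 = p\<^sup>2 - D * c"
  defines "t\<^sub>1 \<equiv> (- p - s) / D" and "t\<^sub>2 \<equiv> (- p + s) / D"
  shows "(1 - t\<^sub>1) * t\<^sub>2 / (- t\<^sub>1 * (t\<^sub>2 - 1)) = (- (p + c) + s) / (- (p + c) - s)"
proof -
  have vieta: "t\<^sub>1 * t\<^sub>2 = c / D"
    using assms(1,2) by (simp add: t\<^sub>1_def t\<^sub>2_def field_simps power2_eq_square) (metis distrib_left)
  have "(1 - t\<^sub>1) * t\<^sub>2 = (- (p + c) + s) / D"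
    using vieta assms(1) by (simp add: t\<^sub>2_def algebra_simps diff_divide_distrib add_divide_distrib)
  moreover have "- t\<^sub>1 * (t\<^sub>2 - 1) = (- (p + c) - s) / D"
    using vieta assms(1) by (simp add: t\<^sub>1_def algebra_simps diff_divide_distrib add_divide_distrib)
  ultimately show ?thesis using assms(1) by simp
qed

lemma divide_eq_square_divide_diff_squares:
  fixes q s :: "'a :: field"
  shows "(q + s) / (q - s) = (q + s)\<^sup>2 / (q\<^sup>2 - s\<^sup>2)"
  by (cases "q + s = 0") (simp_all add: power2_eq_square square_diff_square_factored)

lemma chord_discriminant:
  "(Re (a * cnj (b - a)))\<^sup>2 - (cmod (b - a))\<^sup>2 * ((cmod a)\<^sup>2 - 1)
     = (cmod (a - b))\<^sup>2 - (Im (a * cnj b))\<^sup>2"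
  unfolding cmod_power2 by (simp add: power2_eq_square algebra_simps)

lemma chord_discriminant_nonneg:
  assumes "cmod a < 1"
  shows "(cmod (a - b))\<^sup>2 - (Im (a * cnj b))\<^sup>2 \<ge> 0"
proof -
  have "(cmod (b - a))\<^sup>2 * ((cmod a)\<^sup>2 - 1) \<le> 0"
    using assms by (intro mult_nonneg_nonpos) (simp_all add: abs_square_le_1)
  then show ?thesis
    using chord_discriminant[of a b] zero_le_power2[of "Re (a * cnj (b - a))"] by linarith
qed

lemma Re_one_minus_mult_cnj:
  "- (Re (a * cnj (b - a)) + ((cmod a)\<^sup>2 - 1)) = Re (1 - a * cnj b)"
  unfolding cmod_power2 by (simp add: power2_eq_square algebra_simps)

lemma chord_diff_squares:
  "(Re (1 - a * cnj b))\<^sup>2 - ((cmod (a - b))\<^sup>2 - (Im (a * cnj b))\<^sup>2)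
     = (1 - (cmod a)\<^sup>2) * (1 - (cmod b)\<^sup>2)"
  unfolding cmod_power2 by (simp add: power2_eq_square algebra_simps)

lemma chord_sum_squares:
  "(Re (1 - a * cnj b))\<^sup>2 + ((cmod (a - b))\<^sup>2 - (Im (a * cnj b))\<^sup>2)
     = Re ((1 - a * cnj b)\<^sup>2) + (cmod (a - b))\<^sup>2"
  unfolding cmod_power2 by (simp add: power2_eq_square algebra_simps)

theorem mainTheorem5:
  fixes a b :: complex
  assumes "a \<in> unit_disk" and "b \<in> unit_disk" and "a \<noteq> b"
  shows "hilbert_disk a b =
    ln ((Re ((1 - a * cnj b)^2) + (cmod (a - b))^2
          + 2 * Re (1 - a * cnj b) * sqrt ((cmod (a - b))^2 - (Im (a * cnj b))^2))
        / ((1 - (cmod a)^2) * (1 - (cmod b)^2)))"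
proof -
  define D p c where "D = (cmod (b - a))\<^sup>2" and "p = Re (a * cnj (b - a))" and "c = (cmod a)\<^sup>2 - 1"
  define q s where "q = Re (1 - a * cnj b)" and "s = sqrt ((cmod (a - b))\<^sup>2 - (Im (a * cnj b))\<^sup>2)"
  have "cmod a < 1" and "cmod b < 1" using assms(1,2) by (simp_all add: unit_disk_def)
  have s_eq: "sqrt (p\<^sup>2 - D * c) = s" unfolding s_def D_def p_def c_def chord_discriminant ..
  have s_sq: "s\<^sup>2 = (cmod (a - b))\<^sup>2 - (Im (a * cnj b))\<^sup>2"
    using chord_discriminant_nonneg[OF \<open>cmod a < 1\<close>] by (simp add: s_def)
  then have s2: "s\<^sup>2 = p\<^sup>2 - D * c" unfolding D_def p_def c_def chord_discriminant .
  have "D \<noteq> 0" using assms(3) by (simp add: D_def)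
  have q_eq: "- (p + c) = q" unfolding p_def c_def q_def by (rule Re_one_minus_mult_cnj)
  note chord = unit_circle_on_line[OF \<open>cmod a < 1\<close> \<open>cmod b < 1\<close> assms(3),
      folded D_def p_def c_def, unfolded s_eq]
  have "hilbert_disk a b
      = ln ((1 - (- p - s) / D) * ((- p + s) / D) / (- ((- p - s) / D) * ((- p + s) / D - 1)))"
    by (rule hilbert_disk_eq_ln_cross_ratio[OF assms(3) chord])
  also have "\<dots> = ln ((q + s) / (q - s))"
    using cross_ratio_of_roots[OF \<open>D \<noteq> 0\<close> s2] by (simp only: q_eq)
  also have "\<dots> = ln ((q\<^sup>2 + s\<^sup>2 + 2 * q * s) / (q\<^sup>2 - s\<^sup>2))"
    by (simp add: divide_eq_square_divide_diff_squares power2_sum)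
  also have "\<dots> = ln ((Re ((1 - a * cnj b)\<^sup>2) + (cmod (a - b))\<^sup>2 + 2 * q * s)
      / ((1 - (cmod a)\<^sup>2) * (1 - (cmod b)\<^sup>2)))"
  proof -
    have "q\<^sup>2 + s\<^sup>2 = Re ((1 - a * cnj b)\<^sup>2) + (cmod (a - b))\<^sup>2"
      unfolding s_sq q_def by (rule chord_sum_squares)
    moreover have "q\<^sup>2 - s\<^sup>2 = (1 - (cmod a)\<^sup>2) * (1 - (cmod b)\<^sup>2)"
      unfolding s_sq q_def by (rule chord_diff_squares)
    ultimately show ?thesis by (simp only:)
  qed
  finally show ?thesis unfolding q_def s_def .
qed

end
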